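(* For $n>2$, there is no non-vanishing real exterior $3$-form on $\mathbb{C}^{n+1}=\mathbb{R}^{n+1}+i\mathbb{R}^{n+1}$ (viewed as a real vector space) invariant under the action of ${\sf SO}(1,n)$.
   Context: ${\sf SO}(1,n)$ is the special orthogonal group of the Lorentz form $-x_0^2+x_1^2+\dots+x_n^2$ on $\mathbb{R}^{n+1}$, acting on $\mathbb{C}^{n+1}=\mathbb{R}^{n+1}+i\mathbb{R}^{n+1}$ diagonally by $A(x+iy)=Ax+iAy$. *)

theory Defs
  imports Complex_Main "Jordan_Normal_Form.Determinant"
begin

definition lorentz_mat :: "nat \<Rightarrow> real mat" where
  "lorentz_mat n = mat (n+1) (n+1) (\<lambda>(i,j). if i = j then (if i = 0 then -1 else 1) else 0)"

definition SO1 :: "nat \<Rightarrow> real mat set" where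
  "SO1 n = {A \<in> carrier_mat (n+1) (n+1).
              transpose_mat A * lorentz_mat n * A = lorentz_mat n \<and> det A = 1}"

text \<open>Diagonal action on C^(n+1) = R^(n+1) + i R^(n+1): A(x+iy) = Ax + iAy.\<close>
definition so_act :: "real mat \<Rightarrow> complex vec \<Rightarrow> complex vec" where
  "so_act A z = map_mat complex_of_real A *\<^sub>v z"

definition real_3form :: "nat \<Rightarrow> (complex vec \<Rightarrow> complex vec \<Rightarrow> complex vec \<Rightarrow> real) \<Rightarrow> bool" where
  "real_3form n \<omega> \<longleftrightarrow>
    (let V = carrier_vec (n+1) :: complex vec set in
     (\<forall>a b :: real. \<forall>u\<in>V. \<forall>v\<in>V. \<forall>w\<in>V. \<forall>t\<in>V.
        \<omega> (of_real a \<cdot>\<^sub>v u + of_real b \<cdot>\<^sub>v v) w t = a * \<omega> u w t + b * \<omega> v w t \<and>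
        \<omega> w (of_real a \<cdot>\<^sub>v u + of_real b \<cdot>\<^sub>v v) t = a * \<omega> w u t + b * \<omega> w v t \<and>
        \<omega> w t (of_real a \<cdot>\<^sub>v u + of_real b \<cdot>\<^sub>v v) = a * \<omega> w t u + b * \<omega> w t v) \<and>
     (\<forall>u\<in>V. \<forall>v\<in>V. \<omega> u u v = 0 \<and> \<omega> u v u = 0 \<and> \<omega> v u u = 0))"

definition so_invariant :: "nat \<Rightarrow> (complex vec \<Rightarrow> complex vec \<Rightarrow> complex vec \<Rightarrow> real) \<Rightarrow> bool" where
  "so_invariant n \<omega> \<longleftrightarrow>
    (\<forall>A\<in>SO1 n. \<forall>u\<in>carrier_vec (n+1). \<forall>v\<in>carrier_vec (n+1). \<forall>w\<in>carrier_vec (n+1).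
       \<omega> (so_act A u) (so_act A v) (so_act A w) = \<omega> u v w)"

end

theory Submission
  imports Defs
begin

text \<open>
  Split every vector of \<open>\<complex>\<^sup>n\<^sup>+\<^sup>1\<close> into its coordinate components; by trilinearity it suffices
  to show that \<open>\<omega>\<close> vanishes on triples of components in coordinates \<open>i, j, k\<close>.
  If \<open>i = j = k\<close>, the three arguments lie in the real plane \<open>\<complex> e\<^sub>i\<close>, on which an
  alternating 3-form vanishes. Otherwise some coordinate \<open>m\<close> occurs exactly once among
  \<open>i, j, k\<close>, and since \<open>n + 1 \<ge> 4\<close> there is a coordinate \<open>l\<close> not among them; the
  diagonal matrix with entries \<open>-1\<close> at \<open>m, l\<close> and \<open>1\<close> elsewhere lies in \<open>SO(1,n)\<close> and
  multiplies the term by \<open>-1\<close>, so invariance forces it to vanish.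
\<close>

definition coord_proj :: "nat \<Rightarrow> nat \<Rightarrow> complex vec \<Rightarrow> complex vec" where
  "coord_proj n i u = vec (n+1) (\<lambda>t. if t = i then u $ t else 0)"

definition coord_restrict :: "nat \<Rightarrow> nat set \<Rightarrow> complex vec \<Rightarrow> complex vec" where
  "coord_restrict n I u = vec (n+1) (\<lambda>t. if t \<in> I then u $ t else 0)"

lemma coord_proj_carrier [simp]: "coord_proj n i u \<in> carrier_vec (n+1)"
  unfolding coord_proj_def by simp

lemma additive_sum_coord_proj:
  fixes f :: "complex vec \<Rightarrow> real"
  assumes add: "\<And>x y. x \<in> carrier_vec (n+1) \<Longrightarrow> y \<in> carrier_vec (n+1) \<Longrightarrow> f (x + y) = f x + f y"
    and zero: "f (0\<^sub>v (n+1)) = 0"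
    and u: "u \<in> carrier_vec (n+1)"
  shows "f u = (\<Sum>i<n+1. f (coord_proj n i u))"
proof -
  have "f (coord_restrict n I u) = (\<Sum>i\<in>I. f (coord_proj n i u))" if "finite I" for I
    using that
  proof (induction I rule: finite_induct)
    case empty
    have "coord_restrict n {} u = 0\<^sub>v (n+1)" unfolding coord_restrict_def by auto
    then show ?case using zero by simp
  next
    case (insert i I)
    have "coord_restrict n (insert i I) u = coord_proj n i u + coord_restrict n I u"
      unfolding coord_restrict_def coord_proj_def using insert.hyps by auto
    moreover have "coord_restrict n I u \<in> carrier_vec (n+1)" unfolding coord_restrict_def by simp
    ultimately show ?case
      using add[OF coord_proj_carrier, of "coord_restrict n I u" i u] insert by simp
  qed
  moreover have "coord_restrict n {..<n+1} u = u"
    using u unfolding coord_restrict_def by auto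
  ultimately show ?thesis by (metis finite_lessThan)
qed

definition flip_sign :: "nat \<Rightarrow> nat \<Rightarrow> nat \<Rightarrow> real" where
  "flip_sign m l t = (if t = m \<or> t = l then -1 else 1)"

definition flip_mat :: "nat \<Rightarrow> nat \<Rightarrow> nat \<Rightarrow> real mat" where
  "flip_mat n m l = mat (n+1) (n+1) (\<lambda>(a,b). if a = b then flip_sign m l a else 0)"

lemma mult_diagonal_mats:
  "mat k k (\<lambda>(a,b). if a = b then x a else 0) * mat k k (\<lambda>(a,b). if a = b then y a else 0)
   = mat k k (\<lambda>(a,b). if a = b then x a * y a else (0::'a::semiring_0))"
  by (rule eq_matI)
     (auto simp: scalar_prod_def if_distrib[of "\<lambda>z. z * _"] cong: if_cong)

lemma det_flip_mat:
  assumes "m < n+1" "l < n+1" "m \<noteq> l"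
  shows "det (flip_mat n m l) = 1"
proof -
  have "det (flip_mat n m l) = prod_list (diag_mat (flip_mat n m l))"
    by (rule det_upper_triangular) (auto simp: flip_mat_def)
  also have "\<dots> = prod_list (map (flip_sign m l) [0..<n+1])"
    unfolding diag_mat_def flip_mat_def by (rule arg_cong[of _ _ prod_list]) auto
  also have "\<dots> = prod (flip_sign m l) {0..<n+1}"
    by (metis distinct_upt prod.distinct_set_conv_list set_upt)
  also have "\<dots> = (\<Prod>t\<in>{0..<n+1}. (if t = m then -1 else 1) * (if t = l then -1 else 1))"
    using assms by (intro prod.cong) (auto simp: flip_sign_def)
  also have "\<dots> = 1" using assms by (simp add: prod.distrib prod.delta)
  finally show ?thesis .
qed

lemma flip_mat_SO1:
  assumes "m < n+1" "l < n+1" "m \<noteq> l"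
  shows "flip_mat n m l \<in> SO1 n"
proof -
  have tr: "transpose_mat (flip_mat n m l) = flip_mat n m l" unfolding flip_mat_def by auto
  have L: "lorentz_mat n = mat (n+1) (n+1) (\<lambda>(a,b). if a = b then (if a = 0 then -1 else 1) else 0)"
    unfolding lorentz_mat_def by (rule cong[of "mat (n+1) (n+1)"]) auto
  have "transpose_mat (flip_mat n m l) * lorentz_mat n * flip_mat n m l = lorentz_mat n"
    unfolding tr L unfolding flip_mat_def mult_diagonal_mats
    by (rule cong[of "mat (n+1) (n+1)"]) (auto simp: flip_sign_def)
  then show ?thesis
    using det_flip_mat[OF assms] unfolding SO1_def by (auto simp: flip_mat_def)
qed

lemma so_act_flip_mat_coord_proj:
  "so_act (flip_mat n m l) (coord_proj n i u) = of_real (flip_sign m l i) \<cdot>\<^sub>v coord_proj n i u"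
proof (rule eq_vecI)
  fix t assume "t < dim_vec (of_real (flip_sign m l i) \<cdot>\<^sub>v coord_proj n i u)"
  then have t: "t < n+1" by (simp add: coord_proj_def)
  have "so_act (flip_mat n m l) (coord_proj n i u) $ t
      = (\<Sum>q\<in>{0..<n+1}. of_real (if t = q then flip_sign m l t else 0) * (if q = i then u $ q else 0))"
    using t unfolding so_act_def flip_mat_def coord_proj_def
    by (simp add: scalar_prod_def del: sum.atLeast0_lessThan_Suc)
  also have "\<dots> = (\<Sum>q\<in>{0..<n+1}. if q = i then of_real (if t = i then flip_sign m l t else 0) * u $ i else 0)"
    by (rule sum.cong) auto
  also have "\<dots> = (if i \<in> {0..<n+1} then of_real (if t = i then flip_sign m l t else 0) * u $ i else 0)"
    by (rule sum.delta) simp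
  also have "\<dots> = (of_real (flip_sign m l i) \<cdot>\<^sub>v coord_proj n i u) $ t"
    using t by (auto simp: coord_proj_def)
  finally show "so_act (flip_mat n m l) (coord_proj n i u) $ t
      = (of_real (flip_sign m l i) \<cdot>\<^sub>v coord_proj n i u) $ t" .
qed (simp add: so_act_def flip_mat_def coord_proj_def)

context
  fixes n :: nat and \<omega> :: "complex vec \<Rightarrow> complex vec \<Rightarrow> complex vec \<Rightarrow> real"
  assumes form: "real_3form n \<omega>"
begin

lemma form_linear:
  assumes "u \<in> carrier_vec (n+1)" "v \<in> carrier_vec (n+1)" "w \<in> carrier_vec (n+1)" "t \<in> carrier_vec (n+1)"
  shows form_linear1: "\<omega> (of_real a \<cdot>\<^sub>v u + of_real b \<cdot>\<^sub>v v) w t = a * \<omega> u w t + b * \<omega> v w t"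
    and form_linear2: "\<omega> w (of_real a \<cdot>\<^sub>v u + of_real b \<cdot>\<^sub>v v) t = a * \<omega> w u t + b * \<omega> w v t"
    and form_linear3: "\<omega> w t (of_real a \<cdot>\<^sub>v u + of_real b \<cdot>\<^sub>v v) = a * \<omega> w t u + b * \<omega> w t v"
  using form assms unfolding real_3form_def Let_def by blast+

lemma form_alternating:
  assumes "u \<in> carrier_vec (n+1)" "v \<in> carrier_vec (n+1)"
  shows "\<omega> u u v = 0" "\<omega> u v u = 0" "\<omega> v u u = 0"
  using form assms unfolding real_3form_def Let_def by blast+

lemma form_scale:
  assumes "x \<in> carrier_vec (n+1)" "y \<in> carrier_vec (n+1)" "z \<in> carrier_vec (n+1)"
  shows form_scale1: "\<omega> (of_real a \<cdot>\<^sub>v x) y z = a * \<omega> x y z"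
    and form_scale2: "\<omega> y (of_real a \<cdot>\<^sub>v x) z = a * \<omega> y x z"
    and form_scale3: "\<omega> y z (of_real a \<cdot>\<^sub>v x) = a * \<omega> y z x"
proof -
  have "of_real a \<cdot>\<^sub>v x + of_real 0 \<cdot>\<^sub>v x = of_real a \<cdot>\<^sub>v x" using assms(1) by auto
  then show "\<omega> (of_real a \<cdot>\<^sub>v x) y z = a * \<omega> x y z" "\<omega> y (of_real a \<cdot>\<^sub>v x) z = a * \<omega> y x z"
    "\<omega> y z (of_real a \<cdot>\<^sub>v x) = a * \<omega> y z x"
    using form_linear[OF assms(1,1,2,3), of a 0] by simp_all
qed

lemma form_add:
  assumes "x \<in> carrier_vec (n+1)" "x' \<in> carrier_vec (n+1)" "y \<in> carrier_vec (n+1)" "z \<in> carrier_vec (n+1)"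
  shows form_add1: "\<omega> (x + x') y z = \<omega> x y z + \<omega> x' y z"
    and form_add2: "\<omega> y (x + x') z = \<omega> y x z + \<omega> y x' z"
    and form_add3: "\<omega> y z (x + x') = \<omega> y z x + \<omega> y z x'"
  using form_linear[OF assms, of 1 1] assms(1,2) by auto

lemma form_zero:
  assumes "y \<in> carrier_vec (n+1)" "z \<in> carrier_vec (n+1)"
  shows form_zero1: "\<omega> (0\<^sub>v (n+1)) y z = 0"
    and form_zero2: "\<omega> y (0\<^sub>v (n+1)) z = 0"
    and form_zero3: "\<omega> y z (0\<^sub>v (n+1)) = 0"
proof -
  have "of_real 0 \<cdot>\<^sub>v 0\<^sub>v (n+1) = (0\<^sub>v (n+1) :: complex vec)" by auto
  then show "\<omega> (0\<^sub>v (n+1)) y z = 0" "\<omega> y (0\<^sub>v (n+1)) z = 0" "\<omega> y z (0\<^sub>v (n+1)) = 0"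
    using form_scale[OF zero_carrier_vec assms, of 0] by (metis mult_zero_left)+
qed

lemma form_expand_coords:
  assumes u: "u \<in> carrier_vec (n+1)" and v: "v \<in> carrier_vec (n+1)" and w: "w \<in> carrier_vec (n+1)"
  shows "\<omega> u v w
    = (\<Sum>i<n+1. \<Sum>j<n+1. \<Sum>k<n+1. \<omega> (coord_proj n i u) (coord_proj n j v) (coord_proj n k w))"
proof -
  have "\<omega> u v w = (\<Sum>i<n+1. \<omega> (coord_proj n i u) v w)"
    by (rule additive_sum_coord_proj[OF form_add1[OF _ _ v w] form_zero1[OF v w] u])
  also have "\<dots> = (\<Sum>i<n+1. \<Sum>j<n+1. \<omega> (coord_proj n i u) (coord_proj n j v) w)"
    by (intro sum.cong refl additive_sum_coord_proj[OF
          form_add2[OF _ _ coord_proj_carrier w] form_zero2[OF coord_proj_carrier w] v])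
  also have "\<dots> = (\<Sum>i<n+1. \<Sum>j<n+1. \<Sum>k<n+1. \<omega> (coord_proj n i u) (coord_proj n j v) (coord_proj n k w))"
    by (intro sum.cong refl additive_sum_coord_proj[OF
          form_add3[OF _ _ coord_proj_carrier coord_proj_carrier]
          form_zero3[OF coord_proj_carrier coord_proj_carrier] w])
  finally show ?thesis .
qed

lemma form_vanishes_on_plane:
  assumes x: "x \<in> carrier_vec (n+1)" and y: "y \<in> carrier_vec (n+1)"
  shows "\<omega> (of_real a1 \<cdot>\<^sub>v x + of_real b1 \<cdot>\<^sub>v y) (of_real a2 \<cdot>\<^sub>v x + of_real b2 \<cdot>\<^sub>v y)
     (of_real a3 \<cdot>\<^sub>v x + of_real b3 \<cdot>\<^sub>v y) = 0"
  using x y form_alternating[OF x y] form_alternating[OF y x]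
        form_alternating[OF x x] form_alternating[OF y y]
  by (simp add: form_linear1 form_linear2 form_linear3 del: of_real_minus of_real_1 of_real_0)

lemma form_coord_same:
  assumes i: "i < n+1"
  shows "\<omega> (coord_proj n i u) (coord_proj n i v) (coord_proj n i w) = 0"
proof -
  define e :: "complex vec" where "e = unit_vec (n+1) i"
  have "coord_proj n i z = of_real (Re (z $ i)) \<cdot>\<^sub>v e + of_real (Im (z $ i)) \<cdot>\<^sub>v (\<i> \<cdot>\<^sub>v e)" for z
    unfolding coord_proj_def e_def using i by (auto simp: complex_eq_iff)
  then show ?thesis
    by (simp only:) (rule form_vanishes_on_plane, auto simp: e_def)
qed

lemma form_coord_odd_flip:
  assumes inv: "so_invariant n \<omega>" and ml: "m < n+1" "l < n+1" "m \<noteq> l"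
    and odd: "flip_sign m l i * flip_sign m l j * flip_sign m l k = -1"
  shows "\<omega> (coord_proj n i u) (coord_proj n j v) (coord_proj n k w) = 0"
proof -
  let ?D = "flip_mat n m l"
  have "\<omega> (coord_proj n i u) (coord_proj n j v) (coord_proj n k w)
      = \<omega> (so_act ?D (coord_proj n i u)) (so_act ?D (coord_proj n j v)) (so_act ?D (coord_proj n k w))"
    using inv flip_mat_SO1[OF ml] unfolding so_invariant_def by (metis coord_proj_carrier)
  also have "\<dots> = flip_sign m l k * (flip_sign m l j * (flip_sign m l i *
      \<omega> (coord_proj n i u) (coord_proj n j v) (coord_proj n k w)))"
    unfolding so_act_flip_mat_coord_proj
    by (simp only: form_scale1 form_scale2 form_scale3 coord_proj_carrier smult_carrier_vec)
  also have "\<dots> = - \<omega> (coord_proj n i u) (coord_proj n j v) (coord_proj n k w)"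
    using odd by (metis mult.assoc mult.commute mult_minus1)
  finally show ?thesis by simp
qed

lemma form_coord_vanish:
  assumes inv: "so_invariant n \<omega>" and n: "n > 2" and ijk: "i < n+1" "j < n+1" "k < n+1"
  shows "\<omega> (coord_proj n i u) (coord_proj n j v) (coord_proj n k w) = 0"
proof (cases "i = j \<and> j = k")
  case True
  then show ?thesis using form_coord_same[OF ijk(1)] by simp
next
  case False
  have "card {i,j,k} \<le> 3" by (simp add: card_insert_le_m1)
  then have "card {i,j,k} < card {..<n+1}" using n by simp
  then obtain l where l: "l < n+1" "l \<notin> {i,j,k}"
    by (metis card_mono finite_insert finite.emptyI not_le subsetI lessThan_iff)
  consider "i \<noteq> j" "i \<noteq> k" | "j \<noteq> i" "j \<noteq> k" | "k \<noteq> i" "k \<noteq> j"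
    using False by blast
  then have "\<exists>m\<in>{i,j,k}. flip_sign m l i * flip_sign m l j * flip_sign m l k = -1"
  proof cases
    case 1 then show ?thesis using l(2) by (intro bexI[of _ i]) (auto simp: flip_sign_def)
  next
    case 2 then show ?thesis using l(2) by (intro bexI[of _ j]) (auto simp: flip_sign_def)
  next
    case 3 then show ?thesis using l(2) by (intro bexI[of _ k]) (auto simp: flip_sign_def)
  qed
  then show ?thesis
    using form_coord_odd_flip[OF inv _ l(1)] ijk l(2) by blast
qed

end

theorem fact2p2:
  fixes n :: nat and \<omega> :: "complex vec \<Rightarrow> complex vec \<Rightarrow> complex vec \<Rightarrow> real"
  assumes "n > 2"
    and "real_3form n \<omega>"
    and "so_invariant n \<omega>"
  shows "\<forall>u\<in>carrier_vec (n+1). \<forall>v\<in>carrier_vec (n+1). \<forall>w\<in>carrier_vec (n+1). \<omega> u v w = 0"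
  using form_expand_coords[OF assms(2)] form_coord_vanish[OF assms(2,3,1)] by simp

end
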